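(* Let $\mathsf{A}=(A_1,A_2,A_3)\in GL_2(\mathbb{R})^3$ be such that $A_3=cI$ for some $c\in\mathbb{R}\setminus\{0\}$ and $(A_1,A_2)$ is irreducible and dominated. Then for every H\"older continuous potential $f:\{1,2,3\}^{\mathbb{N}}\to\mathbb{R}$ and every $C>0$ there exist $\mathtt{i}\in\{1,2,3\}^{\mathbb{N}}$ and $n\in\mathbb{N}$ such that $\bigl|\sum_{k=0}^{n-1}f(\sigma^k\mathtt{i})-\log\|A_{\mathtt{i}|_n}\|\bigr|>C$.
   Context: $\|\cdot\|$ is the operator norm. $\sigma$ is the left shift on $\{1,2,3\}^{\mathbb{N}}$, $\mathtt{i}|_n$ the first $n$ symbols of $\mathtt{i}$, $\mathtt{i}\wedge\mathtt{j}$ the longest common prefix, $A_{i_1\cdots i_n}=A_{i_1}\cdots A_{i_n}$. A potential $f$ is H\"older continuous if $|f(\mathtt{i})-f(\mathtt{j})|\le K\tau^{|\mathtt{i}\wedge\mathtt{j}|}$ for some $K>0$, $0<\tau<1$. $(A_1,A_2)$ is irreducible if no 1-dimensional subspace is invariant under both $A_1$ and $A_2$; it is dominated if there exist $K>0$ and $0<\tau<1$ with $|\det(B_1\cdots B_n)|/\|B_1\cdots B_n\|^2\le K\tau^n$ for all $n$ and all $B_1,\dots,B_n\in\{A_1,A_2\}$. *)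

theory Defs
  imports "HOL-Analysis.Analysis"
begin

definition Sigma3 :: "(nat \<Rightarrow> nat) set" where
  "Sigma3 = {i. \<forall>k. i k \<in> {1,2,3}}"

definition shiftk :: "nat \<Rightarrow> (nat \<Rightarrow> nat) \<Rightarrow> (nat \<Rightarrow> nat)" where
  "shiftk k i = (\<lambda>m. i (m + k))"

definition mprod :: "(nat \<Rightarrow> real^2^2) \<Rightarrow> nat \<Rightarrow> real^2^2" where
  "mprod B n = foldr (\<lambda>k M. B k ** M) [0..<n] (mat 1)"

definition opnorm :: "real^2^2 \<Rightarrow> real" where
  "opnorm M = onorm (\<lambda>x. M *v x)"

definition word_prod :: "(nat \<Rightarrow> real^2^2) \<Rightarrow> (nat \<Rightarrow> nat) \<Rightarrow> nat \<Rightarrow> real^2^2" where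
  "word_prod A i n = mprod (\<lambda>k. A (i k)) n"

text \<open>Hoelder continuity: |f i - f j| \<le> K tau^{|i \<and> j|}, written as: whenever i and j
  agree on the first n symbols, |f i - f j| \<le> K tau^n (equivalent since tau^n decreases).\<close>
definition holder_potential :: "((nat \<Rightarrow> nat) \<Rightarrow> real) \<Rightarrow> bool" where
  "holder_potential f \<longleftrightarrow> (\<exists>K>0. \<exists>\<tau>. 0 < \<tau> \<and> \<tau> < 1 \<and>
     (\<forall>i\<in>Sigma3. \<forall>j\<in>Sigma3. \<forall>n. (\<forall>k<n. i k = j k) \<longrightarrow> \<bar>f i - f j\<bar> \<le> K * \<tau> ^ n))"

definition irreducible_pair :: "real^2^2 \<Rightarrow> real^2^2 \<Rightarrow> bool" where
  "irreducible_pair A1 A2 \<longleftrightarrow>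
     \<not> (\<exists>v::real^2. v \<noteq> 0 \<and> A1 *v v \<in> span {v} \<and> A2 *v v \<in> span {v})"

definition dominated_pair :: "real^2^2 \<Rightarrow> real^2^2 \<Rightarrow> bool" where
  "dominated_pair A1 A2 \<longleftrightarrow> (\<exists>K>0. \<exists>\<tau>. 0 < \<tau> \<and> \<tau> < 1 \<and>
     (\<forall>n\<ge>1. \<forall>B. (\<forall>k<n. B k \<in> {A1, A2}) \<longrightarrow>
        \<bar>det (mprod B n)\<bar> / (opnorm (mprod B n))^2 \<le> K * \<tau> ^ n))"

end

(* Suppose the Birkhoff sums of f stay within C of log ||A_{i|n}|| for all i and n.
   Evaluated along the periodic point of a word W and iterated over many periods, this says
   that the weight of W (its Birkhoff sum over one period minus ln |c| for each letter 3)
   computes the exponential growth of the norm of the matrix product of W with the 3s deleted,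
   up to the constant C. Padding words with long blocks of 3s and using Hoelder continuity
   makes the weight additive on words over {1,2}, so
   log ||(A_1^a A_2^b)^j|| = j (a g_1 + b g_2) + O(1).
   After rescaling A_i by exp (- g_i), all powers of every product B_1^a B_2^b have norms
   bounded above and below, while domination forces |det B_i| < 1; such a 2x2 matrix has an
   eigenvalue +1 or -1. Comparing the spectral decompositions of B_1, B_2 with those of the
   products of their even powers produces a common eigenvector, contradicting irreducibility. *)

theory Submission
  imports Defs
begin

section \<open>$2 \times 2$ matrices and the operator norm\<close>

lemma mat2_eq_iff:
  "(M::real^2^2) = N \<longleftrightarrow> M$1$1 = N$1$1 \<and> M$1$2 = N$1$2 \<and> M$2$1 = N$2$1 \<and> M$2$2 = N$2$2"
  by (auto simp: vec_eq_iff forall_2)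

lemma matrix_mult_2: "((M::real^2^2) ** N)$i$j = M$i$1 * N$1$j + M$i$2 * N$2$j"
  by (simp add: matrix_matrix_mult_def sum_2)

lemma trace_2: "trace (M::real^2^2) = M$1$1 + M$2$2"
  by (simp add: trace_def sum_2)

lemma det_scaleR_2: "det (k *\<^sub>R (M::real^2^2)) = k^2 * det M"
  by (simp add: det_2 power2_eq_square algebra_simps)

lemma cayley_hamilton_2: "(M::real^2^2) ** (M ** (X::real^2^2)) = trace M *\<^sub>R (M ** X) - det M *\<^sub>R X"
  by (rule iffD2[OF mat2_eq_iff]) (simp add: matrix_mult_2 det_2 trace_2 algebra_simps)

lemma abs_entry_le_opnorm: "\<bar>M$i$j\<bar> \<le> opnorm M"
  using matrix_component_le_onorm[of M i j] by (simp add: opnorm_def)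

lemma abs_trace_le_opnorm: "\<bar>trace M\<bar> \<le> 2 * opnorm M"
  using abs_entry_le_opnorm[of M 1 1] abs_entry_le_opnorm[of M 2 2] by (simp add: trace_2)

lemma opnorm_nonneg: "0 \<le> opnorm M"
  unfolding opnorm_def by (rule onorm_pos_le[OF matrix_vector_mul_bounded_linear])

lemma opnorm_scaleR: "opnorm (c *\<^sub>R M) = \<bar>c\<bar> * opnorm M"
proof -
  have "(\<lambda>x. (c *\<^sub>R M) *v x) = (\<lambda>x. c *\<^sub>R (M *v x))"
    by (simp add: scaleR_matrix_vector_assoc)
  then show ?thesis
    unfolding opnorm_def using onorm_scaleR[OF matrix_vector_mul_bounded_linear] by simp
qed

lemma opnorm_diff_le: "opnorm (M - N) \<le> opnorm M + opnorm N"
proof -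
  have "opnorm (- N) = opnorm N"
    using opnorm_scaleR[of "-1" N] by simp
  moreover have "(\<lambda>x. (M - N) *v x) = (\<lambda>x. M *v x + (- N) *v x)"
    by (simp add: matrix_vector_mult_add_rdistrib[symmetric])
  moreover have "onorm (\<lambda>x. M *v x + (- N) *v x) \<le> opnorm M + opnorm (- N)"
    unfolding opnorm_def by (intro onorm_triangle matrix_vector_mul_bounded_linear)
  ultimately show ?thesis
    by (simp add: opnorm_def)
qed

lemma opnorm_mat1: "opnorm (mat 1) = 1"
proof -
  have "(\<lambda>x. mat 1 *v x) = (\<lambda>x::real^2. x)"
    by simp
  then show ?thesis
    unfolding opnorm_def using onorm_id by metis
qed

lemma opnorm_pos:
  assumes "invertible M"
  shows "0 < opnorm M"
proof -
  have "M \<noteq> 0"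
    using assms by (auto simp: invertible_det_nz det_2)
  then have "\<exists>x. M *v x \<noteq> 0"
    by (auto simp: matrix_eq)
  then show ?thesis
    unfolding opnorm_def using onorm_pos_lt[OF matrix_vector_mul_bounded_linear] by metis
qed

fun matpow :: "'a::semiring_1^'n^'n \<Rightarrow> nat \<Rightarrow> 'a^'n^'n" where
  "matpow M 0 = mat 1"
| "matpow M (Suc j) = M ** matpow M j"

lemma matpow_Suc_Suc:
  "matpow (M::real^2^2) (Suc (Suc j)) = trace M *\<^sub>R matpow M (Suc j) - det M *\<^sub>R matpow M j"
  using cayley_hamilton_2[of M "matpow M j"] by simp

lemma det_matpow: "det (matpow (M::'a::comm_ring_1^'n^'n) j) = det M ^ j"
  by (induction j) (simp_all add: det_mul det_I)

lemma matpow_scaleR: "matpow (c *\<^sub>R (M::real^'n^'n)) j = c ^ j *\<^sub>R matpow M j"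
  by (induction j) (simp_all add: matrix_scalar_ac scalar_matrix_assoc[symmetric] mult.commute)

lemma invertible_matpow: "invertible M \<Longrightarrow> invertible (matpow M j)"
proof (induction j)
  case 0
  show ?case unfolding invertible_def by (intro exI[of _ "mat 1"]) simp
qed (simp add: invertible_mult)

lemma matpow_eigen_decomposition:
  assumes "B ** P = l *\<^sub>R P" "B ** Q = \<mu> *\<^sub>R Q" "P + Q = mat 1"
  shows "matpow (B::real^'n^'n) j = l^j *\<^sub>R P + \<mu>^j *\<^sub>R Q"
proof (induction j)
  case 0
  then show ?case using assms(3) by simp
next
  case (Suc j)
  have "matpow B (Suc j) = l^j *\<^sub>R (B ** P) + \<mu>^j *\<^sub>R (B ** Q)"
    using Suc by (simp add: matrix_add_ldistrib matrix_scalar_ac scalar_matrix_assoc)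
  then show ?case by (simp add: assms(1,2) mult.commute)
qed

section \<open>Powers of a $2 \times 2$ matrix\<close>

fun lucas :: "real \<Rightarrow> real \<Rightarrow> nat \<Rightarrow> real" where
  "lucas t d 0 = 0"
| "lucas t d (Suc 0) = 1"
| "lucas t d (Suc (Suc j)) = t * lucas t d (Suc j) - d * lucas t d j"

lemma matpow_lucas:
  fixes M :: "real^2^2"
  shows "matpow M (Suc j) = lucas (trace M) (det M) (Suc j) *\<^sub>R M
           - (det M * lucas (trace M) (det M) j) *\<^sub>R mat 1"
proof (induction j)
  case 0
  then show ?case by simp
next
  case (Suc j)
  have "matpow M (Suc (Suc j)) = M ** (lucas (trace M) (det M) (Suc j) *\<^sub>R M
           - (det M * lucas (trace M) (det M) j) *\<^sub>R mat 1)"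
    using Suc by simp
  then show ?case
    by (simp add: mat2_eq_iff matrix_mult_2 det_2 trace_2 mat_def algebra_simps)
qed

lemma lucas_tendsto_zero_imp_matpow_tendsto_zero:
  fixes M :: "real^2^2"
  assumes "lucas (trace M) (det M) \<longlonglongrightarrow> 0"
  shows "(\<lambda>j. opnorm (matpow M j)) \<longlonglongrightarrow> 0"
proof -
  let ?U = "lucas (trace M) (det M)"
  define e where "e j = \<bar>?U (Suc j)\<bar> * opnorm M + \<bar>det M * ?U j\<bar>" for j
  have "(\<lambda>j. ?U (Suc j)) \<longlonglongrightarrow> 0"
    using assms by (rule LIMSEQ_Suc)
  then have "e \<longlonglongrightarrow> \<bar>0\<bar> * opnorm M + \<bar>det M * 0\<bar>"
    unfolding e_def using assms by (intro tendsto_add tendsto_mult tendsto_rabs tendsto_const)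
  then have e_lim: "e \<longlonglongrightarrow> 0"
    by simp
  have bound: "norm (opnorm (matpow M (Suc j))) \<le> e j" for j
  proof -
    have "opnorm (matpow M (Suc j)) \<le> opnorm (?U (Suc j) *\<^sub>R M) + opnorm ((det M * ?U j) *\<^sub>R mat 1)"
      unfolding matpow_lucas by (rule opnorm_diff_le)
    also have "\<dots> = e j"
      by (simp only: opnorm_scaleR opnorm_mat1 e_def mult_1_right)
    finally show ?thesis
      by (simp only: real_norm_def abs_of_nonneg[OF opnorm_nonneg])
  qed
  have "(\<lambda>j. opnorm (matpow M (Suc j))) \<longlonglongrightarrow> 0"
    by (rule Lim_null_comparison[OF always_eventually e_lim]) (rule allI, rule bound)
  then show ?thesis
    by (rule LIMSEQ_imp_Suc)
qed

lemma lucas_root: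
  assumes "a + b = t" "a * b = d"
  shows "lucas t d (Suc j) - a * lucas t d j = b ^ j"
proof (induction j)
  case (Suc j)
  have "lucas t d (Suc (Suc j)) - a * lucas t d (Suc j) = b * (lucas t d (Suc j) - a * lucas t d j)"
    using assms by (auto simp: algebra_simps)
  then show ?case
    using Suc by simp
qed simp

lemma lucas_tendsto_zero_real:
  assumes "a + b = t" "a * b = d" "\<bar>a\<bar> < 1" "\<bar>b\<bar> < 1"
  shows "lucas t d \<longlonglongrightarrow> 0"
proof (cases "a = b")
  case True
  have "lucas t d (Suc j) = of_nat j * a ^ j + a ^ j" for j
  proof (induction j)
    case (Suc j)
    then show ?case
      using lucas_root[OF assms(1,2), of "Suc j"] True by (simp add: algebra_simps)
  qed simp
  moreover have "(\<lambda>j. of_nat j * a ^ j + a ^ j) \<longlonglongrightarrow> 0 + 0"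
    using assms(3) by (intro tendsto_intros powser_times_n_limit_0) auto
  ultimately have "(\<lambda>j. lucas t d (Suc j)) \<longlonglongrightarrow> 0"
    by simp
  then show ?thesis
    by (rule LIMSEQ_imp_Suc)
next
  case False
  have "lucas t d = (\<lambda>j. (b ^ j - a ^ j) / (b - a))"
  proof
    fix j
    have "lucas t d (Suc j) - a * lucas t d j = b ^ j"
      by (rule lucas_root[OF assms(1,2)])
    moreover have "lucas t d (Suc j) - b * lucas t d j = a ^ j"
      by (rule lucas_root) (use assms in \<open>auto simp: algebra_simps\<close>)
    ultimately have "(b - a) * lucas t d j = b ^ j - a ^ j"
      by (simp add: algebra_simps)
    then show "lucas t d j = (b ^ j - a ^ j) / (b - a)"
      using False by (simp add: field_simps)
  qed
  moreover have "(\<lambda>j. (b ^ j - a ^ j) / (b - a)) \<longlonglongrightarrow> (0 - 0) / (b - a)"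
    using assms(3,4) False by (intro tendsto_intros LIMSEQ_abs_realpow_zero2) auto
  ultimately show ?thesis
    by simp
qed

lemma lucas_tendsto_zero_complex:
  assumes "t^2 < 4 * d" "d < 1"
  shows "lucas t d \<longlonglongrightarrow> 0"
proof -
  define \<delta> where "\<delta> = d - t^2 / 4"
  have "d > 0"
    using assms(1) by (smt (verit) zero_le_power2)
  have "\<delta> > 0"
    using assms(1) by (simp add: \<delta>_def)
  \<comment> \<open>the positive definite form $x^2 - t x y + d y^2$ takes the value $d^j$
    at consecutive terms\<close>
  have invariant: "lucas t d (Suc j) ^ 2 - t * lucas t d (Suc j) * lucas t d j + d * lucas t d j ^ 2 = d ^ j" for j
  proof (induction j)
    case (Suc j)
    have "lucas t d (Suc (Suc j)) ^ 2 - t * lucas t d (Suc (Suc j)) * lucas t d (Suc j)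
        + d * lucas t d (Suc j) ^ 2
      = d * (lucas t d (Suc j) ^ 2 - t * lucas t d (Suc j) * lucas t d j + d * lucas t d j ^ 2)"
      by (simp add: power2_eq_square algebra_simps)
    then show ?case
      using Suc by simp
  qed simp
  have bound: "norm (lucas t d j) \<le> sqrt (d ^ j / \<delta>)" for j
  proof -
    have "\<delta> * lucas t d j ^ 2 \<le> (lucas t d (Suc j) - t * lucas t d j / 2)^2 + \<delta> * lucas t d j ^ 2"
      by simp
    also have "\<dots> = d ^ j"
      using invariant[of j] by (simp add: \<delta>_def power2_eq_square algebra_simps)
    finally have "lucas t d j ^ 2 \<le> d ^ j / \<delta>"
      using \<open>\<delta> > 0\<close> by (simp add: field_simps)
    then show ?thesis
      using real_sqrt_le_mono by fastforce
  qed
  have "(\<lambda>j. sqrt (d ^ j / \<delta>)) \<longlonglongrightarrow> sqrt (0 / \<delta>)"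
    using \<open>d > 0\<close> \<open>\<delta> > 0\<close> assms(2) by (intro tendsto_intros LIMSEQ_realpow_zero) auto
  then have "(\<lambda>j. sqrt (d ^ j / \<delta>)) \<longlonglongrightarrow> 0"
    by simp
  then show ?thesis
    by (rule Lim_null_comparison[OF always_eventually, rotated]) (rule allI, rule bound)
qed

lemma trace_matpow:
  fixes M :: "real^2^2"
  assumes "a + b = trace M" "a * b = det M"
  shows "trace (matpow M j) = a ^ j + b ^ j"
proof -
  have "trace (matpow M j) = a ^ j + b ^ j \<and> trace (matpow M (Suc j)) = a ^ Suc j + b ^ Suc j"
  proof (induction j)
    case 0
    then show ?case
      using assms(1) by (simp add: trace_I)
  next
    case (Suc j)
    have "trace (matpow M (Suc (Suc j))) = trace M * trace (matpow M (Suc j)) - det M * trace (matpow M j)"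
      by (subst matpow_Suc_Suc) (simp add: trace_2 algebra_simps)
    then show ?case
      using Suc assms[symmetric] by (simp add: algebra_simps)
  qed
  then show ?thesis
    by simp
qed

lemma matpow_unbounded:
  fixes M :: "real^2^2"
  assumes "a + b = trace M" "a * b = det M" "\<bar>a\<bar> > 1" "\<bar>b\<bar> \<le> 1"
  obtains j where "hi < opnorm (matpow M j)"
proof -
  obtain j where j: "2 * hi + 1 < \<bar>a\<bar> ^ j"
    using real_arch_pow assms(3) by blast
  have "\<bar>b ^ j\<bar> \<le> 1"
    using assms(4) by (simp add: power_abs power_le_one)
  then have "\<bar>a\<bar> ^ j - 1 \<le> \<bar>a ^ j + b ^ j\<bar>"
    by (simp add: power_abs[symmetric])
  also have "\<dots> \<le> 2 * opnorm (matpow M j)"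
    using abs_trace_le_opnorm[of "matpow M j"] trace_matpow[OF assms(1,2)] by simp
  finally show ?thesis
    using j that by (smt (verit))
qed


lemma bounded_matpow_eigenvalue_pm_one:
  fixes M :: "real^2^2"
  assumes "\<bar>det M\<bar> < 1" and "0 < lo"
    and lower: "\<And>j. lo \<le> opnorm (matpow M j)" and upper: "\<And>j. opnorm (matpow M j) \<le> hi"
  shows "(1 + det M)^2 = (trace M)^2"
proof (rule ccontr)
  let ?t = "trace M" and ?d = "det M"
  assume ne: "(1 + ?d)^2 \<noteq> ?t^2"
  have not_zero: "\<not> lucas ?t ?d \<longlonglongrightarrow> 0"
  proof
    assume "lucas ?t ?d \<longlonglongrightarrow> 0"
    then have "(\<lambda>j. opnorm (matpow M j)) \<longlonglongrightarrow> 0"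
      by (rule lucas_tendsto_zero_imp_matpow_tendsto_zero)
    then have "lo \<le> 0"
      using LIMSEQ_le_const lower by blast
    then show False
      using \<open>0 < lo\<close> by simp
  qed
  show False
  proof (cases "?t^2 < 4 * ?d")
    case True
    then show False
      using lucas_tendsto_zero_complex not_zero assms(1) by auto
  next
    case False
    define s where "s = sqrt (?t^2 - 4 * ?d)"
    define a where "a = (?t + s) / 2"
    define b where "b = (?t - s) / 2"
    have "s^2 = ?t^2 - 4 * ?d"
      using False by (simp add: s_def)
    then have ab: "a + b = ?t" "a * b = ?d"
      by (simp_all add: a_def b_def field_simps power2_eq_square)
    then have "(1 - a^2) * (1 - b^2) = (1 + ?d)^2 - ?t^2"
      unfolding ab[symmetric] by (simp add: power2_eq_square algebra_simps)
    then have "a^2 \<noteq> 1" "b^2 \<noteq> 1"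
      using ne by auto
    then have a1: "\<bar>a\<bar> \<noteq> 1" and b1: "\<bar>b\<bar> \<noteq> 1"
      by (auto simp: abs_if power2_eq_square)
    have ab_lt: "\<bar>a\<bar> * \<bar>b\<bar> < 1"
      using ab(2) assms(1) by (simp add: abs_mult[symmetric])
    consider "\<bar>a\<bar> > 1" | "\<bar>b\<bar> > 1" | "\<bar>a\<bar> < 1" "\<bar>b\<bar> < 1"
      using a1 b1 by linarith
    then show False
    proof cases
      case 1
      then have "\<bar>b\<bar> \<le> 1"
        using ab_lt by (smt (verit) mult_le_cancel_right1 abs_ge_zero)
      then obtain j where "hi < opnorm (matpow M j)"
        using matpow_unbounded[OF ab 1] by blast
      then show False
        using upper[of j] by simp
    next
      case 2
      then have "\<bar>a\<bar> \<le> 1"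
        using ab_lt by (smt (verit) mult_le_cancel_left1 abs_ge_zero)
      moreover have "b + a = ?t" "b * a = ?d"
        using ab by (simp_all add: algebra_simps)
      ultimately obtain j where "hi < opnorm (matpow M j)"
        using matpow_unbounded[of b a M, OF _ _ 2] by blast
      then show False
        using upper[of j] by simp
    next
      case 3
      then show False
        using lucas_tendsto_zero_real[OF ab] not_zero by blast
    qed
  qed
qed

section \<open>A common eigenvector\<close>

lemma eigenvalue_pm_one:
  fixes B :: "real^2^2"
  assumes "(1 + det B)^2 = (trace B)^2"
  obtains \<epsilon> where "\<epsilon>^2 = 1" "trace B = \<epsilon> + \<epsilon> * det B" "det B = \<epsilon> * (\<epsilon> * det B)"
proof -
  have "trace B = 1 + det B \<or> trace B = - (1 + det B)"
    using assms by (metis power2_eq_iff)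
  then show ?thesis
    using that[of 1] that[of "-1"] by auto
qed

lemma eigen_projections_2:
  fixes B :: "real^2^2"
  assumes "trace B = l + \<mu>" "det B = l * \<mu>" "l \<noteq> \<mu>"
  obtains P Q where "B ** P = l *\<^sub>R P" "B ** Q = \<mu> *\<^sub>R Q" "P + Q = mat 1" "det Q = 0" "Q \<noteq> 0"
proof -
  define k where "k = 1 / (l - \<mu>)"
  have k: "k * (l - \<mu>) = 1"
    using assms(3) by (simp add: k_def)
  define P where "P = k *\<^sub>R (B - \<mu> *\<^sub>R mat 1)"
  define Q where "Q = k *\<^sub>R (l *\<^sub>R mat 1 - B)"
  have tr: "B$1$1 + B$2$2 = l + \<mu>" and dt: "B$1$1 * B$2$2 - B$1$2 * B$2$1 = l * \<mu>"
    using assms(1,2) by (simp_all add: trace_2 det_2)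
  have BP: "B ** P = l *\<^sub>R P"
    unfolding P_def mat2_eq_iff by (simp add: matrix_mult_2 mat_def) (use tr dt in algebra)
  moreover have "B ** Q = \<mu> *\<^sub>R Q"
    unfolding Q_def mat2_eq_iff by (simp add: matrix_mult_2 mat_def) (use tr dt in algebra)
  moreover have PQ: "P + Q = mat 1"
    unfolding P_def Q_def mat2_eq_iff by (simp add: mat_def) (use k in algebra)
  moreover have "det Q = 0"
    unfolding Q_def det_2 by (simp add: mat_def) (use tr dt in algebra)
  moreover have "Q \<noteq> 0"
  proof
    assume "Q = 0"
    then have "B = l *\<^sub>R mat 1"
      using BP PQ by simp
    then have "\<mu> = l"
      using tr by (simp add: mat_def)
    then show False
      using assms(3) by simp
  qed
  ultimately show ?thesis
    by (rule that)
qed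

lemma quadratic_eq_zero_at_three_points:
  fixes \<alpha> \<beta> \<gamma> :: real
  assumes "distinct [y1, y2, y3]" and "\<And>y. y \<in> {y1, y2, y3} \<Longrightarrow> \<alpha> + \<beta> * y + \<gamma> * y^2 = 0"
  shows "\<alpha> = 0 \<and> \<beta> = 0 \<and> \<gamma> = 0"
proof -
  have "(y1 - y2) * (\<beta> + \<gamma> * (y1 + y2)) = 0" "(y1 - y3) * (\<beta> + \<gamma> * (y1 + y3)) = 0"
    using assms(2)[of y1] assms(2)[of y2] assms(2)[of y3] by (simp_all add: power2_eq_square algebra_simps)
  then have "\<beta> + \<gamma> * (y1 + y2) = 0" "\<beta> + \<gamma> * (y1 + y3) = 0"
    using assms(1) by auto
  then have "\<gamma> * (y2 - y3) = 0"
    by algebra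
  then have "\<gamma> = 0"
    using assms(1) by simp
  moreover from this have "\<beta> * (y1 - y2) = 0"
    using assms(2)[of y1] assms(2)[of y2] by simp algebra
  ultimately show ?thesis
    using assms(1) assms(2)[of y1] by simp
qed

lemma trace_cross_term_zero:
  fixes P1 Q1 P2 Q2 :: "real^2^2"
  assumes "distinct [x1, x2, x3]" "distinct [y1, y2, y3]"
    and "\<And>x y. x \<in> {x1, x2, x3} \<Longrightarrow> y \<in> {y1, y2, y3} \<Longrightarrow>
           (1 + x * y)^2 = (trace ((P1 + x *\<^sub>R Q1) ** (P2 + y *\<^sub>R Q2)))^2"
  shows "trace (P1 ** Q2) = 0"
proof -
  define T11 where "T11 = trace (P1 ** P2)"
  define T12 where "T12 = trace (P1 ** Q2)"
  define T21 where "T21 = trace (Q1 ** P2)"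
  define T22 where "T22 = trace (Q1 ** Q2)"
  have expand: "trace ((P1 + x *\<^sub>R Q1) ** (P2 + y *\<^sub>R Q2)) = T11 + y * T12 + x * T21 + x * y * T22"
    for x y
    by (simp add: T11_def T12_def T21_def T22_def trace_2 matrix_mult_2 algebra_simps)
  \<comment> \<open>compare the coefficients of $y^2$, then of $x^0$\<close>
  have leading: "x^2 - (T12 + x * T22)^2 = 0" if x: "x \<in> {x1, x2, x3}" for x
  proof -
    have "(1 - (T11 + x * T21)^2) + (2 * x - 2 * (T11 + x * T21) * (T12 + x * T22)) * y
        + (x^2 - (T12 + x * T22)^2) * y^2 = 0" if "y \<in> {y1, y2, y3}" for y
      using assms(3)[OF x that] unfolding expand by algebra
    then show ?thesis
      using quadratic_eq_zero_at_three_points[OF assms(2), of "1 - (T11 + x * T21)^2"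
          "2 * x - 2 * (T11 + x * T21) * (T12 + x * T22)" "x^2 - (T12 + x * T22)^2"]
      by (simp add: mult.commute)
  qed
  have "- (T12^2) + (- 2 * T12 * T22) * x + (1 - T22^2) * x^2 = 0" if "x \<in> {x1, x2, x3}" for x
    using leading[OF that] by (simp add: power2_eq_square algebra_simps)
  then have "- (T12^2) = 0"
    using quadratic_eq_zero_at_three_points[OF assms(1), of "- (T12^2)" "- 2 * T12 * T22" "1 - T22^2"]
    by (simp add: mult.commute)
  then show ?thesis
    by (simp add: T12_def)
qed

lemma det_zero_sandwich_2:
  assumes "det (Q::real^2^2) = 0"
  shows "Q ** X ** Q = trace (Q ** X) *\<^sub>R Q"
  unfolding mat2_eq_iff using assms unfolding det_2 by (simp add: matrix_mult_2 trace_2) algebra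

lemma matrix_vector_eigen:
  fixes B P :: "real^'n^'n"
  assumes "B ** P = l *\<^sub>R P" "P *v v = v"
  shows "B *v v = l *\<^sub>R v"
proof -
  have "B *v v = (B ** P) *v v"
    by (simp add: matrix_vector_mul_assoc[symmetric] assms(2))
  also have "\<dots> = l *\<^sub>R v"
    by (simp add: assms scaleR_matrix_vector_assoc[symmetric])
  finally show ?thesis .
qed

lemma complement_fixes:
  fixes P Q :: "real^'n^'n"
  assumes "P + Q = mat 1" "Q *v v = 0"
  shows "P *v v = v"
  using arg_cong[OF assms(1), of "\<lambda>M. M *v v"] assms(2) by (simp add: matrix_vector_mult_add_rdistrib)

lemma common_eigenvector_of_projections:
  fixes B1 B2 :: "real^2^2"
  assumes B1: "B1 ** P1 = \<epsilon>1 *\<^sub>R P1" "B1 ** Q1 = \<mu>1 *\<^sub>R Q1" "P1 + Q1 = mat 1"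
    and B2: "B2 ** P2 = \<epsilon>2 *\<^sub>R P2" "B2 ** Q2 = \<mu>2 *\<^sub>R Q2" "P2 + Q2 = mat 1"
    and "det Q2 = 0" "Q2 \<noteq> 0" "trace (P1 ** Q2) = 0"
  shows "\<exists>v. v \<noteq> 0 \<and> B1 *v v \<in> span {v} \<and> B2 *v v \<in> span {v}"
proof (cases "P1 ** Q2 = 0")
  case True
  obtain x where "Q2 *v x \<noteq> 0"
    using \<open>Q2 \<noteq> 0\<close> by (metis matrix_eq matrix_vector_mult_0)
  define v where "v = Q2 *v x"
  have "P1 *v v = 0"
    by (simp add: v_def matrix_vector_mul_assoc True)
  moreover have "Q1 + P1 = mat 1"
    using B1(3) by (simp add: add.commute)
  ultimately have "Q1 *v v = v"
    by (intro complement_fixes)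
  then have "B1 *v v = \<mu>1 *\<^sub>R v"
    by (rule matrix_vector_eigen[OF B1(2)])
  moreover have "B2 *v v = \<mu>2 *\<^sub>R v"
    by (simp add: v_def matrix_vector_mul_assoc B2 scaleR_matrix_vector_assoc[symmetric])
  ultimately show ?thesis
    using \<open>Q2 *v x \<noteq> 0\<close> unfolding v_def[symmetric]
    by (intro exI[of _ v]) (simp add: span_base span_mul)
next
  case False
  obtain x where "(P1 ** Q2) *v x \<noteq> 0"
    using False by (metis matrix_eq matrix_vector_mult_0)
  define v where "v = (P1 ** Q2) *v x"
  have "B1 *v v = (B1 ** P1 ** Q2) *v x"
    by (simp add: v_def matrix_vector_mul_assoc matrix_mul_assoc)
  also have "\<dots> = \<epsilon>1 *\<^sub>R v"
    by (simp add: B1(1) v_def scalar_matrix_assoc[symmetric] scaleR_matrix_vector_assoc)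
  finally have "B1 *v v = \<epsilon>1 *\<^sub>R v" .
  \<comment> \<open>$Q_2$ has rank one, so $Q_2 P_1 Q_2 = \mathrm{tr}(Q_2 P_1)\, Q_2 = 0$\<close>
  moreover have "trace (Q2 ** P1) = 0"
    unfolding trace_mul_sym[of Q2 P1] by fact
  then have "Q2 ** P1 ** Q2 = 0"
    using det_zero_sandwich_2[OF \<open>det Q2 = 0\<close>, of P1] by simp
  then have "Q2 *v v = 0"
    by (simp add: v_def matrix_vector_mul_assoc matrix_mul_assoc)
  then have "B2 *v v = \<epsilon>2 *\<^sub>R v"
    by (rule matrix_vector_eigen[OF B2(1) complement_fixes[OF B2(3)]])
  ultimately show ?thesis
    using \<open>(P1 ** Q2) *v x \<noteq> 0\<close> unfolding v_def[symmetric]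
    by (intro exI[of _ v]) (simp add: span_base span_mul)
qed


lemma distinct_powers_of_contraction:
  fixes z :: real
  assumes "0 < z" "z < 1"
  shows "distinct [z, z^2, z^3]"
proof -
  have "z^2 < z" "z^3 < z^2"
    using assms by (simp_all add: power2_eq_square power3_eq_cube)
  then show ?thesis
    by auto
qed

lemma common_eigenvector_if_products_have_eigenvalue_pm_one:
  fixes B1 B2 :: "real^2^2"
  assumes "det B1 \<noteq> 0" "\<bar>det B1\<bar> < 1" "det B2 \<noteq> 0" "\<bar>det B2\<bar> < 1"
    and pm_one: "\<And>a b. (1 + det (matpow B1 a ** matpow B2 b))^2 = (trace (matpow B1 a ** matpow B2 b))^2"
  shows "\<exists>v. v \<noteq> 0 \<and> B1 *v v \<in> span {v} \<and> B2 *v v \<in> span {v}"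
proof -
  have "(1 + det B1)^2 = (trace B1)^2"
    using pm_one[of 1 0] by simp
  then obtain \<epsilon>1 where \<epsilon>1: "\<epsilon>1^2 = 1" "trace B1 = \<epsilon>1 + \<epsilon>1 * det B1" "det B1 = \<epsilon>1 * (\<epsilon>1 * det B1)"
    by (rule eigenvalue_pm_one)
  have "(1 + det B2)^2 = (trace B2)^2"
    using pm_one[of 0 1] by simp
  then obtain \<epsilon>2 where \<epsilon>2: "\<epsilon>2^2 = 1" "trace B2 = \<epsilon>2 + \<epsilon>2 * det B2" "det B2 = \<epsilon>2 * (\<epsilon>2 * det B2)"
    by (rule eigenvalue_pm_one)
  define \<mu>1 where "\<mu>1 = \<epsilon>1 * det B1"
  define \<mu>2 where "\<mu>2 = \<epsilon>2 * det B2"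
  have abs_\<epsilon>: "\<bar>\<epsilon>1\<bar> = 1" "\<bar>\<epsilon>2\<bar> = 1"
    using \<epsilon>1(1) \<epsilon>2(1) by (auto simp: power2_eq_1_iff)
  then have \<mu>: "\<mu>1 \<noteq> 0" "\<bar>\<mu>1\<bar> < 1" "\<mu>2 \<noteq> 0" "\<bar>\<mu>2\<bar> < 1"
    using assms(1-4) by (auto simp: \<mu>1_def \<mu>2_def abs_mult)
  obtain P1 Q1 where P1: "B1 ** P1 = \<epsilon>1 *\<^sub>R P1" "B1 ** Q1 = \<mu>1 *\<^sub>R Q1" "P1 + Q1 = mat 1"
    using eigen_projections_2[of B1 \<epsilon>1 \<mu>1] \<epsilon>1(2,3) abs_\<epsilon> \<mu> unfolding \<mu>1_def[symmetric] by force
  obtain P2 Q2 where P2: "B2 ** P2 = \<epsilon>2 *\<^sub>R P2" "B2 ** Q2 = \<mu>2 *\<^sub>R Q2" "P2 + Q2 = mat 1"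
    "det Q2 = 0" "Q2 \<noteq> 0"
    using eigen_projections_2[of B2 \<epsilon>2 \<mu>2] \<epsilon>2(2,3) abs_\<epsilon> \<mu> unfolding \<mu>2_def[symmetric] by force
  define z1 where "z1 = \<mu>1^2"
  define z2 where "z2 = \<mu>2^2"
  \<comment> \<open>even powers kill the eigenvalues $\pm 1$\<close>
  have "matpow B1 (2 * a) = P1 + z1^a *\<^sub>R Q1" for a
    using matpow_eigen_decomposition[OF P1, of "2 * a"] \<epsilon>1(1) by (simp add: power_mult z1_def)
  moreover have "matpow B2 (2 * b) = P2 + z2^b *\<^sub>R Q2" for b
    using matpow_eigen_decomposition[OF P2(1-3), of "2 * b"] \<epsilon>2(1) by (simp add: power_mult z2_def)
  moreover have "det (matpow B1 (2 * a) ** matpow B2 (2 * b)) = z1^a * z2^b" for a b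
    using \<epsilon>1(1) \<epsilon>2(1)
    by (simp add: det_mul det_matpow power_mult z1_def z2_def \<mu>1_def \<mu>2_def power_mult_distrib)
  ultimately have grid: "(1 + z1^a * z2^b)^2 = (trace ((P1 + z1^a *\<^sub>R Q1) ** (P2 + z2^b *\<^sub>R Q2)))^2" for a b
    using pm_one[of "2 * a" "2 * b"] by simp
  have "trace (P1 ** Q2) = 0"
  proof (rule trace_cross_term_zero)
    show "distinct [z1, z1^2, z1^3]" "distinct [z2, z2^2, z2^3]"
      using \<mu> by (intro distinct_powers_of_contraction; simp add: z1_def z2_def abs_square_less_1)+
    fix x y
    assume "x \<in> {z1, z1^2, z1^3}" "y \<in> {z2, z2^2, z2^3}"
    then obtain a b where "x = z1^a" "y = z2^b"
      by (metis empty_iff insert_iff power_one_right)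
    then show "(1 + x * y)^2 = (trace ((P1 + x *\<^sub>R Q1) ** (P2 + y *\<^sub>R Q2)))^2"
      using grid by simp
  qed
  then show ?thesis
    using common_eigenvector_of_projections[OF P1 P2] by blast
qed

section \<open>Periodic points and their matrix products\<close>

definition periodic_point :: "nat list \<Rightarrow> nat \<Rightarrow> nat" where
  "periodic_point W k = W ! (k mod length W)"

definition list_prod :: "(nat \<Rightarrow> real^2^2) \<Rightarrow> nat list \<Rightarrow> real^2^2" where
  "list_prod A W = foldr (\<lambda>a M. A a ** M) W (mat 1)"

definition birkhoff_sum :: "((nat \<Rightarrow> nat) \<Rightarrow> real) \<Rightarrow> (nat \<Rightarrow> nat) \<Rightarrow> nat \<Rightarrow> real" where
  "birkhoff_sum f i n = (\<Sum>k<n. f (shiftk k i))"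

lemma mprod_0 [simp]: "mprod B 0 = mat 1"
  by (simp add: mprod_def)

lemma mprod_Suc: "mprod B (Suc n) = B 0 ** mprod (\<lambda>k. B (Suc k)) n"
proof -
  have "[0..<Suc n] = 0 # map Suc [0..<n]"
    by (simp add: upt_conv_Cons map_Suc_upt)
  then show ?thesis
    by (simp add: mprod_def foldr_map o_def)
qed

lemma mprod_add: "mprod B (n + m) = mprod B n ** mprod (\<lambda>k. B (n + k)) m"
proof (induction n arbitrary: B)
  case 0
  then show ?case
    by simp
next
  case (Suc n)
  have "mprod B (Suc n + m) = B 0 ** (mprod (\<lambda>k. B (Suc k)) n ** mprod (\<lambda>k. B (Suc (n + k))) m)"
    using mprod_Suc[of B "n + m"] Suc[of "\<lambda>k. B (Suc k)"] by simp
  then show ?case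
    by (simp add: mprod_Suc matrix_mul_assoc)
qed

lemma mprod_cong: "(\<And>k. k < n \<Longrightarrow> B k = B' k) \<Longrightarrow> mprod B n = mprod B' n"
proof (induction n arbitrary: B B')
  case 0
  then show ?case
    by (simp add: mprod_def)
next
  case (Suc n)
  then have "mprod (\<lambda>k. B (Suc k)) n = mprod (\<lambda>k. B' (Suc k)) n"
    by (intro Suc.IH) auto
  then show ?case
    using Suc.prems[of 0] by (simp add: mprod_Suc)
qed

lemma mprod_const: "mprod (\<lambda>_. M) n = matpow M n"
  by (induction n) (simp_all add: mprod_Suc)

lemma mprod_nth: "mprod (\<lambda>k. A (W ! k)) (length W) = list_prod A W"
  by (induction W) (simp_all add: mprod_Suc list_prod_def)

lemma list_prod_append: "list_prod A (U @ W) = list_prod A U ** list_prod A W"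
  by (induction U) (simp_all add: list_prod_def matrix_mul_assoc)

lemma list_prod_replicate: "list_prod A (replicate a x) = matpow (A x) a"
  by (induction a) (simp_all add: list_prod_def)

lemma invertible_list_prod:
  "(\<And>a. a \<in> set W \<Longrightarrow> invertible (A a)) \<Longrightarrow> invertible (list_prod A W)"
proof (induction W)
  case Nil
  show ?case
    unfolding list_prod_def invertible_def by (intro exI[of _ "mat 1"]) simp
qed (simp add: list_prod_def invertible_mult)

lemma list_prod_scalar_letter:
  assumes "A x = c *\<^sub>R mat 1"
  shows "list_prod A W = c ^ count_list W x *\<^sub>R list_prod A (filter (\<lambda>y. y \<noteq> x) W)"
proof (induction W)
  case Nil
  then show ?case
    by (simp add: list_prod_def)
next
  case (Cons a W)
  then show ?case
    using assms by (auto simp: list_prod_def matrix_scalar_ac scalar_matrix_assoc[symmetric])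
qed

lemma periodic_point_nth: "k < length W \<Longrightarrow> periodic_point W k = W ! k"
  by (simp add: periodic_point_def)

lemma periodic_point_in_Sigma3:
  assumes "W \<noteq> []" "set W \<subseteq> {1,2,3}"
  shows "periodic_point W \<in> Sigma3"
  unfolding Sigma3_def periodic_point_def
proof (intro CollectI allI)
  fix k
  have "W ! (k mod length W) \<in> set W"
    using assms(1) by simp
  then show "W ! (k mod length W) \<in> {1,2,3}"
    using assms(2) by blast
qed

lemma shiftk_in_Sigma3: "i \<in> Sigma3 \<Longrightarrow> shiftk k i \<in> Sigma3"
  by (simp add: Sigma3_def shiftk_def)

lemma shiftk_periodic_point:
  "W \<noteq> [] \<Longrightarrow> shiftk (length W + k) (periodic_point W) = shiftk k (periodic_point W)"
  unfolding shiftk_def periodic_point_def by (rule ext) (metis add.left_commute mod_add_self1)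

lemma word_prod_periodic_point:
  assumes "W \<noteq> []"
  shows "word_prod A (periodic_point W) (j * length W) = matpow (list_prod A W) j"
proof (induction j)
  case 0
  then show ?case
    by (simp add: word_prod_def mprod_def)
next
  case (Suc j)
  have "periodic_point W (length W + k) = periodic_point W k" for k
    using assms by (simp add: periodic_point_def)
  then have "mprod (\<lambda>k. A (periodic_point W (length W + k))) = mprod (\<lambda>k. A (periodic_point W k))"
    by simp
  moreover have "mprod (\<lambda>k. A (periodic_point W k)) (length W) = list_prod A W"
    by (subst mprod_nth[symmetric], rule mprod_cong) (simp add: periodic_point_nth)
  ultimately show ?case
    using Suc mprod_add[of "\<lambda>k. A (periodic_point W k)" "length W" "j * length W"]
    by (simp add: word_prod_def)
qed

lemma sum_lessThan_add:
  "(\<Sum>k<a + b::nat. F k) = (\<Sum>k<a. F k) + (\<Sum>k<b. F (a + k))"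
  by (induction b) (simp_all add: add.assoc)

lemma sum_lessThan_periodic:
  fixes F :: "nat \<Rightarrow> real"
  assumes "\<And>k. F (p + k) = F k"
  shows "(\<Sum>k<j * p. F k) = real j * (\<Sum>k<p. F k)"
proof (induction j)
  case (Suc j)
  then show ?case
    using sum_lessThan_add[of F p "j * p"] assms by (simp add: algebra_simps)
qed simp

lemma birkhoff_sum_periodic_point:
  assumes "W \<noteq> []"
  shows "birkhoff_sum f (periodic_point W) (j * length W)
    = real j * birkhoff_sum f (periodic_point W) (length W)"
  unfolding birkhoff_sum_def
  by (rule sum_lessThan_periodic) (simp add: shiftk_periodic_point[OF assms])


lemma periodic_point_append_left:
  assumes "m \<le> length U" "m \<le> length W" "take m U = take m W" "r < length U + m"
  shows "periodic_point (U @ W) r = periodic_point U r"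
proof (cases "r < length U")
  case True
  then show ?thesis
    by (simp add: periodic_point_def nth_append)
next
  case False
  define q where "q = r - length U"
  have q: "q < m" "r mod length U = q" "r = length U + q"
    using False assms(1,4) by (simp_all add: q_def le_mod_geq)
  have "U ! q = W ! q"
    using assms(3) q(1) by (metis nth_take)
  then show ?thesis
    using q assms(1,2) by (simp add: periodic_point_def nth_append)
qed

lemma periodic_point_append_right:
  assumes "m \<le> length U" "m \<le> length W" "take m U = take m W" "r < length W + m"
  shows "periodic_point (U @ W) (length U + r) = periodic_point W r"
proof (cases "r < length W")
  case True
  then show ?thesis
    by (simp add: periodic_point_def nth_append)
next
  case False
  define q where "q = r - length W"
  have q: "q < m" "r mod length W = q" "(length U + r) mod length (U @ W) = q"
    using False assms(1,2,4) by (simp_all add: q_def le_mod_geq)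
  have "U ! q = W ! q"
    using assms(3) q(1) by (metis nth_take)
  then show ?thesis
    using q assms(1) by (simp add: periodic_point_def nth_append)
qed

lemma sum_shift_diff_le:
  assumes close: "\<And>i j. i \<in> Sigma3 \<Longrightarrow> j \<in> Sigma3 \<Longrightarrow> (\<forall>k<m. i k = j k) \<Longrightarrow> \<bar>f i - f j\<bar> \<le> e"
    and "i \<in> Sigma3" "j \<in> Sigma3"
    and agree: "\<And>k q. k < n \<Longrightarrow> q < m \<Longrightarrow> i (a + k + q) = j (k + q)"
  shows "\<bar>(\<Sum>k<n. f (shiftk (a + k) i)) - (\<Sum>k<n. f (shiftk k j))\<bar> \<le> real n * e"
proof -
  have "\<bar>f (shiftk (a + k) i) - f (shiftk k j)\<bar> \<le> e" if "k < n" for k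
  proof (rule close[OF shiftk_in_Sigma3[OF assms(2)] shiftk_in_Sigma3[OF assms(3)]])
    show "\<forall>q<m. shiftk (a + k) i q = shiftk k j q"
      using agree[OF that] by (simp add: shiftk_def add.commute add.left_commute)
  qed
  then have "(\<Sum>k<n. \<bar>f (shiftk (a + k) i) - f (shiftk k j)\<bar>) \<le> real n * e"
    using sum_bounded_above[of "{..<n}" "\<lambda>k. \<bar>f (shiftk (a + k) i) - f (shiftk k j)\<bar>" e] by simp
  then show ?thesis
    using sum_abs[of "\<lambda>k. f (shiftk (a + k) i) - f (shiftk k j)" "{..<n}"] by (simp add: sum_subtractf)
qed


lemma multiples_bounded_imp_zero:
  fixes \<delta> :: real
  assumes "\<And>j::nat. \<bar>real j * \<delta>\<bar> \<le> D"
  shows "\<delta> = 0"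
proof (rule ccontr)
  assume "\<delta> \<noteq> 0"
  obtain j :: nat where "D / \<bar>\<delta>\<bar> < real j"
    using reals_Archimedean2 by blast
  then have "D < \<bar>real j * \<delta>\<bar>"
    using \<open>\<delta> \<noteq> 0\<close> by (simp add: field_simps abs_mult)
  then show False
    using assms[of j] by simp
qed

lemma bounded_by_null_sequence_imp_zero:
  fixes x :: real
  assumes "g \<longlonglongrightarrow> 0" "\<And>m. m \<ge> 1 \<Longrightarrow> \<bar>x\<bar> \<le> g m"
  shows "x = 0"
proof -
  have "\<bar>x\<bar> \<le> 0"
    by (rule LIMSEQ_le_const[OF assms(1)]) (intro exI[of _ 1] allI impI assms(2))
  then show ?thesis
    by simp
qed

section \<open>Birkhoff sums along periodic points\<close>

text \<open>The hypotheses of the theorem together with the negation of its conclusion;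
  \<open>K\<close> and \<open>\<tau>\<close> are Hoelder constants of \<open>f\<close>.\<close>

locale bounded_deviation =
  fixes A :: "nat \<Rightarrow> real^2^2" and c :: real and f :: "(nat \<Rightarrow> nat) \<Rightarrow> real" and C K \<tau> :: real
  assumes invertible_A: "invertible (A 1)" "invertible (A 2)"
    and c_nonzero: "c \<noteq> 0" and A3: "A 3 = c *\<^sub>R mat 1"
    and \<tau>: "0 < \<tau>" "\<tau> < 1"
    and holder: "\<And>i j n. i \<in> Sigma3 \<Longrightarrow> j \<in> Sigma3 \<Longrightarrow> (\<forall>k<n. i k = j k) \<Longrightarrow> \<bar>f i - f j\<bar> \<le> K * \<tau> ^ n"
    and deviation: "\<And>i n. i \<in> Sigma3 \<Longrightarrow>
      \<bar>birkhoff_sum f i n - ln (opnorm (word_prod A i n))\<bar> \<le> C"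
begin

definition weight :: "nat list \<Rightarrow> real" where
  "weight W = birkhoff_sum f (periodic_point W) (length W) - real (count_list W 3) * ln \<bar>c\<bar>"

lemma weight_bound:
  assumes "W \<noteq> []" "set W \<subseteq> {1,2,3}"
  shows "\<bar>real j * weight W - ln (opnorm (matpow (list_prod A (filter (\<lambda>x. x \<noteq> 3) W)) j))\<bar> \<le> C"
proof -
  define Y where "Y = list_prod A (filter (\<lambda>x. x \<noteq> 3) W)"
  define N where "N = count_list W 3"
  have "invertible Y"
    unfolding Y_def using assms(2) invertible_A by (intro invertible_list_prod) auto
  then have pos: "0 < opnorm (matpow Y j)"
    by (intro opnorm_pos invertible_matpow)
  have "list_prod A W = c ^ N *\<^sub>R Y"
    unfolding Y_def N_def by (rule list_prod_scalar_letter[of A 3 c W, OF A3])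
  then have "word_prod A (periodic_point W) (j * length W) = (c ^ N) ^ j *\<^sub>R matpow Y j"
    by (simp add: word_prod_periodic_point[OF assms(1)] matpow_scaleR)
  then have "ln (opnorm (word_prod A (periodic_point W) (j * length W)))
      = real j * (real N * ln \<bar>c\<bar>) + ln (opnorm (matpow Y j))"
    using pos c_nonzero by (simp add: opnorm_scaleR ln_mult power_abs ln_realpow)
  then show ?thesis
    using deviation[OF periodic_point_in_Sigma3[OF assms], of "j * length W"]
    unfolding birkhoff_sum_periodic_point[OF assms(1)] weight_def Y_def N_def
    by (simp add: algebra_simps)
qed

lemma weight_eq_if_filter_eq:
  assumes "W \<noteq> []" "set W \<subseteq> {1,2,3}" "W' \<noteq> []" "set W' \<subseteq> {1,2,3}"
    and "filter (\<lambda>x. x \<noteq> 3) W = filter (\<lambda>x. x \<noteq> 3) W'"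
  shows "weight W = weight W'"
proof -
  have "\<bar>real j * (weight W - weight W')\<bar> \<le> 2 * C" for j
    using weight_bound[OF assms(1,2), of j] weight_bound[OF assms(3,4), of j] assms(5)
    by (simp add: abs_le_iff algebra_simps)
  then have "weight W - weight W' = 0"
    by (rule multiples_bounded_imp_zero)
  then show ?thesis
    by simp
qed

lemma weight_append:
  assumes "U \<noteq> []" "set U \<subseteq> {1,2,3}" "W \<noteq> []" "set W \<subseteq> {1,2,3}"
    and "m \<le> length U" "m \<le> length W" "take m U = take m W"
  shows "\<bar>weight (U @ W) - weight U - weight W\<bar> \<le> real (length U + length W) * (K * \<tau> ^ m)"
proof -
  have UW: "periodic_point (U @ W) \<in> Sigma3"
    using assms(1-4) by (intro periodic_point_in_Sigma3) auto
  have agree_left: "periodic_point (U @ W) (0 + k + q) = periodic_point U (k + q)"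
    if "k < length U" "q < m" for k q
    using that by (simp add: periodic_point_append_left[OF assms(5-7)])
  have agree_right: "periodic_point (U @ W) (length U + k + q) = periodic_point W (k + q)"
    if "k < length W" "q < m" for k q
    using that periodic_point_append_right[OF assms(5-7), of "k + q"] by (simp add: add.assoc)
  have left: "\<bar>(\<Sum>k<length U. f (shiftk (0 + k) (periodic_point (U @ W))))
      - (\<Sum>k<length U. f (shiftk k (periodic_point U)))\<bar> \<le> real (length U) * (K * \<tau> ^ m)"
    by (intro sum_shift_diff_le[OF holder UW periodic_point_in_Sigma3[OF assms(1,2)]] agree_left)
  have right: "\<bar>(\<Sum>k<length W. f (shiftk (length U + k) (periodic_point (U @ W))))
      - (\<Sum>k<length W. f (shiftk k (periodic_point W)))\<bar> \<le> real (length W) * (K * \<tau> ^ m)"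
    by (intro sum_shift_diff_le[OF holder UW periodic_point_in_Sigma3[OF assms(3,4)]] agree_right)
  have "birkhoff_sum f (periodic_point (U @ W)) (length (U @ W))
      = (\<Sum>k<length U. f (shiftk (0 + k) (periodic_point (U @ W))))
        + (\<Sum>k<length W. f (shiftk (length U + k) (periodic_point (U @ W))))"
    unfolding birkhoff_sum_def length_append sum_lessThan_add by simp
  then show ?thesis
    using left right unfolding weight_def birkhoff_sum_def
    by (simp add: count_list_append algebra_simps)
qed

definition reduced_weight :: "nat list \<Rightarrow> real" where
  "reduced_weight u = weight (3 # u)"

lemma weight_padded:
  assumes "m \<ge> 1" "set u \<subseteq> {1,2}" "set v \<subseteq> {1,2}"
  shows "weight (replicate m 3 @ u) = reduced_weight u"
    and "weight (replicate m 3 @ u @ replicate m 3 @ v) = reduced_weight (u @ v)"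
  using assms unfolding reduced_weight_def
  by (auto intro!: weight_eq_if_filter_eq simp: filter_id_conv)

lemma reduced_weight_append:
  assumes "set u \<subseteq> {1,2}" "set v \<subseteq> {1,2}"
  shows "reduced_weight (u @ v) = reduced_weight u + reduced_weight v"
proof -
  \<comment> \<open>separating $u$ and $v$ by $m$ copies of the scalar letter makes the error $O(m \tau^m)$\<close>
  have "\<bar>reduced_weight (u @ v) - reduced_weight u - reduced_weight v\<bar>
      \<le> (2 * real m + real (length u + length v)) * (K * \<tau> ^ m)" if "m \<ge> 1" for m
    using weight_append[of "replicate m 3 @ u" "replicate m 3 @ v" m] assms that
      subset_insertI2[OF assms(1), of 3] subset_insertI2[OF assms(2), of 3]
    by (simp add: weight_padded algebra_simps insert_commute)
  moreover have "(\<lambda>m. (2 * real m + real (length u + length v)) * (K * \<tau> ^ m)) \<longlonglongrightarrow> 0"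
  proof -
    have "(\<lambda>m. (2 * (real m * \<tau> ^ m) + real (length u + length v) * \<tau> ^ m) * K)
        \<longlonglongrightarrow> (2 * 0 + real (length u + length v) * 0) * K"
      using \<tau> by (intro tendsto_intros powser_times_n_limit_0 LIMSEQ_realpow_zero) auto
    then show ?thesis
      by (simp add: algebra_simps)
  qed
  ultimately have "reduced_weight (u @ v) - reduced_weight u - reduced_weight v = 0"
    by (intro bounded_by_null_sequence_imp_zero) auto
  then show ?thesis
    by simp
qed

lemma reduced_weight_replicate:
  "reduced_weight (replicate a 1 @ replicate b 2) = real a * reduced_weight [1] + real b * reduced_weight [2]"
proof -
  have "reduced_weight (replicate b 2) = real b * reduced_weight [2]"
  proof (induction b)
    case 0
    show ?case
      using reduced_weight_append[of "[]" "[]"] by simp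
  next
    case (Suc b)
    have "reduced_weight ([2] @ replicate b 2) = reduced_weight [2] + reduced_weight (replicate b 2)"
      by (rule reduced_weight_append) auto
    then show ?case
      using Suc by (simp add: algebra_simps)
  qed
  then show ?thesis
  proof (induction a)
    case (Suc a)
    have "reduced_weight ([1] @ replicate a 1 @ replicate b 2)
        = reduced_weight [1] + reduced_weight (replicate a 1 @ replicate b 2)"
      by (rule reduced_weight_append) auto
    then show ?case
      using Suc by (simp add: algebra_simps)
  qed simp
qed

lemma log_norm_power_products:
  "\<bar>real j * (real a * reduced_weight [1] + real b * reduced_weight [2])
    - ln (opnorm (matpow (matpow (A 1) a ** matpow (A 2) b) j))\<bar> \<le> C"
proof -
  define W :: "nat list" where "W = 3 # replicate a 1 @ replicate b 2"
  have "W \<noteq> []" "set W \<subseteq> {1,2,3}"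
    by (auto simp: W_def)
  moreover have "list_prod A (filter (\<lambda>x. x \<noteq> 3) W) = matpow (A 1) a ** matpow (A 2) b"
    by (simp add: W_def list_prod_append list_prod_replicate)
  moreover have "weight W = real a * reduced_weight [1] + real b * reduced_weight [2]"
    using reduced_weight_replicate by (simp add: W_def reduced_weight_def)
  ultimately show ?thesis
    using weight_bound[of W j] by simp
qed

end

section \<open>Domination and reducibility\<close>

lemma power_le_geometric_imp_less_one:
  fixes x :: real
  assumes "0 < \<tau>" "\<tau> < 1" "\<And>n. n \<ge> 1 \<Longrightarrow> x ^ n \<le> D * \<tau> ^ n"
  shows "x < 1"
proof (rule ccontr)
  assume "\<not> x < 1"
  have "(\<lambda>n. D * \<tau> ^ n) \<longlonglongrightarrow> D * 0"
    using assms(1,2) by (intro tendsto_intros LIMSEQ_realpow_zero) auto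
  then have "\<forall>\<^sub>F n in sequentially. D * \<tau> ^ n < 1"
    using zero_less_one[where 'a=real] by (simp add: order_tendstoD(2))
  then obtain N where N: "\<And>n. n \<ge> N \<Longrightarrow> D * \<tau> ^ n < 1"
    by (auto simp: eventually_sequentially)
  have "1 \<le> x ^ (N + 1)"
    using \<open>\<not> x < 1\<close> by (intro one_le_power) simp
  also have "\<dots> \<le> D * \<tau> ^ (N + 1)"
    using assms(3)[of "N + 1"] by simp
  also have "\<dots> < 1"
    using N[of "N + 1"] by simp
  finally show False
    by simp
qed

lemma det_ratio_scaleR:
  fixes M :: "real^2^2"
  assumes "s \<noteq> 0"
  shows "\<bar>det (matpow (s *\<^sub>R M) n)\<bar> / (opnorm (matpow (s *\<^sub>R M) n))^2
    = \<bar>det (matpow M n)\<bar> / (opnorm (matpow M n))^2"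
  using assms by (simp add: matpow_scaleR det_scaleR_2 opnorm_scaleR abs_mult power_mult_distrib)

lemma abs_det_less_one_if_dominated:
  fixes M :: "real^2^2"
  assumes "0 < \<tau>" "\<tau> < 1" "invertible M"
    and dom: "\<And>n. n \<ge> 1 \<Longrightarrow> \<bar>det (matpow M n)\<bar> / (opnorm (matpow M n))^2 \<le> K * \<tau> ^ n"
    and bounded: "\<And>n. opnorm (matpow M n) \<le> D"
  shows "\<bar>det M\<bar> < 1"
proof (rule power_le_geometric_imp_less_one[OF assms(1,2)])
  fix n :: nat
  assume "n \<ge> 1"
  have pos: "0 < opnorm (matpow M n)"
    by (intro opnorm_pos invertible_matpow assms(3))
  have "0 \<le> K * \<tau> ^ n"
    using dom[OF \<open>n \<ge> 1\<close>] by (smt (verit) divide_nonneg_nonneg abs_ge_zero zero_le_power2)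
  have "\<bar>det M\<bar> ^ n \<le> K * \<tau> ^ n * (opnorm (matpow M n))^2"
    using dom[OF \<open>n \<ge> 1\<close>] pos by (simp add: det_matpow power_abs divide_le_eq)
  also have "\<dots> \<le> K * \<tau> ^ n * D^2"
    using \<open>0 \<le> K * \<tau> ^ n\<close> pos bounded[of n] by (intro mult_left_mono power_mono) auto
  finally show "\<bar>det M\<bar> ^ n \<le> (K * D^2) * \<tau> ^ n"
    by (simp add: algebra_simps)
qed

lemma scaled_power_products_bounded:
  fixes A1 A2 :: "real^2^2"
  assumes "invertible A1" "invertible A2"
    and linear: "\<bar>real j * (real a * \<gamma>1 + real b * \<gamma>2) - ln (opnorm (matpow (matpow A1 a ** matpow A2 b) j))\<bar> \<le> C"
  defines "X \<equiv> matpow (matpow (exp (- \<gamma>1) *\<^sub>R A1) a ** matpow (exp (- \<gamma>2) *\<^sub>R A2) b) j"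
  shows "exp (- C) \<le> opnorm X" "opnorm X \<le> exp C"
proof -
  define Y where "Y = matpow (matpow A1 a ** matpow A2 b) j"
  define t where "t = real j * (real a * \<gamma>1 + real b * \<gamma>2)"
  have "0 < opnorm Y"
    unfolding Y_def using assms(1,2) by (intro opnorm_pos invertible_matpow invertible_mult)
  have "matpow (exp (- \<gamma>1) *\<^sub>R A1) a ** matpow (exp (- \<gamma>2) *\<^sub>R A2) b
      = (exp (- \<gamma>1) ^ a * exp (- \<gamma>2) ^ b) *\<^sub>R (matpow A1 a ** matpow A2 b)"
    by (simp add: matpow_scaleR matrix_scalar_ac scalar_matrix_assoc[symmetric] mult.commute)
  moreover have "(exp (- \<gamma>1) ^ a * exp (- \<gamma>2) ^ b) ^ j = exp (- t)"
    by (simp add: t_def exp_of_nat_mult[symmetric] exp_add[symmetric] algebra_simps)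
  ultimately have "X = exp (- t) *\<^sub>R Y"
    by (simp add: X_def Y_def matpow_scaleR)
  then have "ln (opnorm X) = ln (opnorm Y) - t" and "0 < opnorm X"
    using \<open>0 < opnorm Y\<close> by (simp_all add: opnorm_scaleR ln_mult)
  moreover have "\<bar>ln (opnorm X)\<bar> \<le> C"
    using linear calculation(1) by (simp add: t_def Y_def)
  ultimately show "exp (- C) \<le> opnorm X" "opnorm X \<le> exp C"
    by (metis abs_le_iff exp_le_cancel_iff exp_ln minus_le_iff)+
qed

lemma common_eigenvector_if_log_norm_linear:
  fixes A1 A2 :: "real^2^2"
  assumes "invertible A1" "invertible A2" "dominated_pair A1 A2"
    and linear: "\<And>a b j. \<bar>real j * (real a * \<gamma>1 + real b * \<gamma>2)
      - ln (opnorm (matpow (matpow A1 a ** matpow A2 b) j))\<bar> \<le> C"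
  shows "\<exists>v. v \<noteq> 0 \<and> A1 *v v \<in> span {v} \<and> A2 *v v \<in> span {v}"
proof -
  define B1 where "B1 = exp (- \<gamma>1) *\<^sub>R A1"
  define B2 where "B2 = exp (- \<gamma>2) *\<^sub>R A2"
  have lower: "exp (- C) \<le> opnorm (matpow (matpow B1 a ** matpow B2 b) j)"
    and upper: "opnorm (matpow (matpow B1 a ** matpow B2 b) j) \<le> exp C" for a b j
    unfolding B1_def B2_def using scaled_power_products_bounded[OF assms(1,2) linear] by auto
  obtain K \<tau> where \<tau>: "0 < \<tau>" "\<tau> < 1" and dom: "\<And>n B. n \<ge> 1 \<Longrightarrow> (\<forall>k<n. B k \<in> {A1, A2}) \<Longrightarrow>
      \<bar>det (mprod B n)\<bar> / (opnorm (mprod B n))^2 \<le> K * \<tau> ^ n"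
    using assms(3) unfolding dominated_pair_def by blast
  have "\<bar>det B1\<bar> < 1"
  proof (rule abs_det_less_one_if_dominated[OF \<tau>])
    show "invertible B1"
      using assms(1) by (simp add: B1_def invertible_det_nz det_scaleR_2)
    show "\<bar>det (matpow B1 n)\<bar> / (opnorm (matpow B1 n))^2 \<le> K * \<tau> ^ n" if "n \<ge> 1" for n
      using dom[OF that, of "\<lambda>_. A1"] by (simp add: B1_def det_ratio_scaleR mprod_const)
    show "opnorm (matpow B1 n) \<le> exp C" for n
      using upper[of 1 0 n] by simp
  qed
  moreover have "\<bar>det B2\<bar> < 1"
  proof (rule abs_det_less_one_if_dominated[OF \<tau>])
    show "invertible B2"
      using assms(2) by (simp add: B2_def invertible_det_nz det_scaleR_2)
    show "\<bar>det (matpow B2 n)\<bar> / (opnorm (matpow B2 n))^2 \<le> K * \<tau> ^ n" if "n \<ge> 1" for n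
      using dom[OF that, of "\<lambda>_. A2"] by (simp add: B2_def det_ratio_scaleR mprod_const)
    show "opnorm (matpow B2 n) \<le> exp C" for n
      using upper[of 0 1 n] by simp
  qed
  moreover have "det B1 \<noteq> 0" "det B2 \<noteq> 0"
    using assms(1,2) by (simp_all add: B1_def B2_def invertible_det_nz det_scaleR_2)
  moreover have "(1 + det (matpow B1 a ** matpow B2 b))^2 = (trace (matpow B1 a ** matpow B2 b))^2"
    for a b
  proof (cases "a = 0 \<and> b = 0")
    case True
    then show ?thesis
      by (simp add: det_I trace_I)
  next
    case False
    have le: "\<bar>det B1\<bar> ^ a \<le> 1" "\<bar>det B2\<bar> ^ b \<le> 1"
      using \<open>\<bar>det B1\<bar> < 1\<close> \<open>\<bar>det B2\<bar> < 1\<close> by (simp_all add: power_le_one)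
    have "\<bar>det B1\<bar> ^ a < 1 \<or> \<bar>det B2\<bar> ^ b < 1"
      using False \<open>\<bar>det B1\<bar> < 1\<close> \<open>\<bar>det B2\<bar> < 1\<close> by (auto simp: power_less_one_iff)
    then have "\<bar>det B1\<bar> ^ a * \<bar>det B2\<bar> ^ b < 1"
      using le mult_right_le_one_le[of "\<bar>det B1\<bar> ^ a" "\<bar>det B2\<bar> ^ b"]
        mult_left_le_one_le[of "\<bar>det B2\<bar> ^ b" "\<bar>det B1\<bar> ^ a"] by auto
    then have "\<bar>det (matpow B1 a ** matpow B2 b)\<bar> < 1"
      by (simp add: det_mul det_matpow abs_mult power_abs)
    then show ?thesis
      using lower upper by (intro bounded_matpow_eigenvalue_pm_one) auto
  qed
  ultimately obtain v where v: "v \<noteq> 0" "B1 *v v \<in> span {v}" "B2 *v v \<in> span {v}"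
    using common_eigenvector_if_products_have_eigenvalue_pm_one by blast
  have "A1 *v v = exp \<gamma>1 *\<^sub>R (B1 *v v)" "A2 *v v = exp \<gamma>2 *\<^sub>R (B2 *v v)"
    by (simp_all add: B1_def B2_def scaleR_matrix_vector_assoc exp_minus)
  then show ?thesis
    using v by (intro exI[of _ v]) (simp add: span_mul)
qed


theorem lemma4p6:
  fixes A :: "nat \<Rightarrow> real^2^2" and c :: real
  assumes "invertible (A 1)" and "invertible (A 2)" and "invertible (A 3)"
    and "c \<noteq> 0" and "A 3 = c *\<^sub>R mat 1"
    and "irreducible_pair (A 1) (A 2)" and "dominated_pair (A 1) (A 2)"
  shows "\<forall>f. holder_potential f \<longrightarrow> (\<forall>C>0. \<exists>i\<in>Sigma3. \<exists>n::nat.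
           \<bar>(\<Sum>k<n. f (shiftk k i)) - ln (opnorm (word_prod A i n))\<bar> > C)"
proof (intro allI impI)
  fix f :: "(nat \<Rightarrow> nat) \<Rightarrow> real" and C :: real
  assume "holder_potential f" "C > 0"
  then obtain K \<tau> where \<tau>: "0 < \<tau>" "\<tau> < 1" and holder: "\<And>i j n. i \<in> Sigma3 \<Longrightarrow> j \<in> Sigma3 \<Longrightarrow>
      (\<forall>k<n. i k = j k) \<Longrightarrow> \<bar>f i - f j\<bar> \<le> K * \<tau> ^ n"
    unfolding holder_potential_def by blast
  show "\<exists>i\<in>Sigma3. \<exists>n. \<bar>(\<Sum>k<n. f (shiftk k i)) - ln (opnorm (word_prod A i n))\<bar> > C"
  proof (rule ccontr)
    assume "\<not> ?thesis"
    then interpret bounded_deviation A c f C K \<tau>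
      using assms(1,2,4,5) \<tau> holder by unfold_locales (auto simp: birkhoff_sum_def not_less)
    have "\<exists>v. v \<noteq> 0 \<and> A 1 *v v \<in> span {v} \<and> A 2 *v v \<in> span {v}"
      by (rule common_eigenvector_if_log_norm_linear[OF assms(1,2,7) log_norm_power_products])
    then show False
      using assms(6) by (simp add: irreducible_pair_def)
  qed
qed

end
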